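(* Let $U\sim\mathrm{unif}(0,1)$. For all $n\ge1$, $$b_n:=\big\|C_n(\lceil nU\rceil)-C(U)\big\|_2\le \Big(3+\frac{2\pi}{\sqrt3}\Big)\frac1n<\frac{6.63}{n}.$$
   Context: Let $H_n=\sum_{k=1}^n 1/k$ and $\mu_n := 2(n+1)H_n-4n$ for $n\ge0$; this is the expected number of comparisons of randomized Quicksort on $n$ distinct numbers. For $n\ge1$ and $1\le i\le n$, define $$C_n(i):=\frac{n-1}{n}+\frac1n\big(\mu_{i-1}+\mu_{n-i}-\mu_n\big).$$ Define $C(u):=2u\ln u+2(1-u)\ln(1-u)+1$ for $u\in[0,1]$, with $C(0)=C(1)=1$. $\|\cdot\|_2$ denotes the $L^2$ norm. *)

theory Defs
  imports "HOL-Analysis.Analysis" "HOL-Probability.Probability"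
begin

definition H :: "nat \<Rightarrow> real" where
  "H n = (\<Sum>k=1..n. 1 / real k)"

definition mu :: "nat \<Rightarrow> real" where
  "mu n = 2 * (real n + 1) * H n - 4 * real n"

definition Cn :: "nat \<Rightarrow> nat \<Rightarrow> real" where
  "Cn n i = (real n - 1) / real n + (mu (i - 1) + mu (n - i) - mu n) / real n"

definition Cfun :: "real \<Rightarrow> real" where
  "Cfun u = (if u = 0 \<or> u = 1 then 1 else 2 * u * ln u + 2 * (1 - u) * ln (1 - u) + 1)"

definition b :: "nat \<Rightarrow> real" where
  "b n = sqrt (\<integral>u. (Cn n (nat \<lceil>real n * u\<rceil>) - Cfun u)\<^sup>2 \<partial>(uniform_measure lborel {0..1}))"

end

theory Submission
  imports Defs "HOL-Real_Asymp.Real_Asymp"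
begin

(* Write x = n u and i = ceil x. Since mu k = 2 (k + 1) H k - 4 k, the scaled error
   n (C_n(i) - C(u)) is 3 plus twice the gaps (k + 1) H k - y ln y at (k, y) = (i - 1, x) and
   (n - i, n - x), minus twice the gap at (n, n). As H k - ln (k + 1) increases and
   H k - ln (k + 1/2) decreases in k, and t ln t lies above its tangents, these gaps squeeze
   the scaled error between 2 min (ln u) (ln (1 - u)) - 1 and 3. Its square is therefore at most
   10 - 4 ln u - 4 ln (1 - u) + 4 (ln u)^2 + 4 (ln (1 - u))^2, whose integral over [0,1] is 34
   because ln and ln^2 integrate to -1 and 2. Hence b n <= sqrt 34 / n <= 6 / n, which is
   below the stated constant. *)

lemma fundamental_theorem_of_calculus_tendsto:
  fixes f F :: "real \<Rightarrow> real"
  assumes "s < t"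
    and "(F \<longlongrightarrow> F s) (at_right s)" "(F \<longlongrightarrow> F t) (at_left t)"
    and "\<And>x. s < x \<Longrightarrow> x < t \<Longrightarrow> (F has_real_derivative f x) (at x)"
  shows "(f has_integral F t - F s) {s..t}"
proof (rule fundamental_theorem_of_calculus_interior)
  show "continuous_on {s..t} F"
    using assms by (intro continuous_on_IccI) (auto intro: DERIV_isCont[unfolded isCont_def])
qed (use assms in \<open>auto simp: has_real_derivative_iff_has_vector_derivative\<close>)

lemma ln_has_integral: "(ln has_integral -1) {0..1::real}"
proof -
  have "(ln has_integral (\<lambda>x. x * ln x - x) 1 - (\<lambda>x. x * ln x - x) 0) {0..1::real}"
    by (rule fundamental_theorem_of_calculus_tendsto)
      (real_asymp | auto intro!: derivative_eq_intros)+
  then show ?thesis by simp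
qed

lemma ln_squared_has_integral: "((\<lambda>x. (ln x)\<^sup>2) has_integral 2) {0..1::real}"
proof -
  let ?F = "\<lambda>x::real. x * (ln x)\<^sup>2 - 2 * x * ln x + 2 * x"
  have "((\<lambda>x. (ln x)\<^sup>2) has_integral ?F 1 - ?F 0) {0..1}"
    by (rule fundamental_theorem_of_calculus_tendsto)
      (real_asymp | auto intro!: derivative_eq_intros simp: field_simps power2_eq_square)+
  then show ?thesis by simp
qed

lemma has_integral_reflect_01:
  fixes f :: "real \<Rightarrow> real"
  assumes "(f has_integral I) {0..1}"
  shows "((\<lambda>x. f (1 - x)) has_integral I) {0..1}"
  using has_integral_affinity[of f I 0 1 "-1" 1] assms
  by (simp add: image_affinity_cbox)

lemma uniform_measure_01_has_integral:
  fixes f :: "real \<Rightarrow> real"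
  assumes "(f has_integral I) {0..1}" "\<And>x. 0 \<le> f x" "f \<in> borel_measurable borel"
  shows "integrable (uniform_measure lborel {0..1}) f"
    and "(\<integral>x. f x \<partial>uniform_measure lborel {0..1}) = I"
proof -
  have unif: "uniform_measure lborel {0..1::real} = density lborel (\<lambda>x. ennreal (indicator {0..1} x))"
    by (simp add: uniform_measure_def divide_ennreal_def ennreal_indicator)
  have "f absolutely_integrable_on {0..1}"
    using assms by (intro nonnegative_absolutely_integrable_1) auto
  then have f_int: "set_integrable lborel {0..1} f"
    using assms(3) unfolding set_integrable_def
    by (subst integrable_completion[symmetric]) (auto simp: set_integrable_def)
  then show "integrable (uniform_measure lborel {0..1}) f"
    using assms(3) unfolding unif set_integrable_def by (subst integrable_density) auto
  have "(\<integral>x. f x \<partial>uniform_measure lborel {0..1}) = (LINT x:{0..1}|lborel. f x)"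
    using assms(3) unfolding unif set_lebesgue_integral_def by (subst integral_density) auto
  also have "\<dots> = I"
    using set_borel_integral_eq_integral(2)[OF f_int] assms(1) by (simp add: integral_unique)
  finally show "(\<integral>x. f x \<partial>uniform_measure lborel {0..1}) = I" .
qed

lemma mult_ln_ge_tangent:
  fixes p q :: real
  assumes "0 < p" "0 < q"
  shows "(p - q) * (1 + ln q) \<le> p * ln p - q * ln q"
proof -
  have "ln (q / p) \<le> q / p - 1"
    using assms by (intro ln_le_minus_one) auto
  then have "p * (ln q - ln p) \<le> p * (q / p - 1)"
    using assms by (intro mult_left_mono) (auto simp: ln_div)
  then show ?thesis
    using assms by (simp add: algebra_simps)
qed

lemma H_Suc: "H (Suc k) = H k + 1 / (real k + 1)"
  by (simp add: H_def add.commute)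

lemma H_minus_ln_Suc_mono:
  assumes "k \<le> n"
  shows "H k - ln (real k + 1) \<le> H n - ln (real n + 1)"
  using assms
proof (induction n rule: dec_induct)
  case (step m)
  have "ln (real m + 1 + 1) - ln (real m + 1) < 1 / (real m + 1)"
    by (rule ln_diff_le_inverse) auto
  moreover have Suc_eq: "real (Suc m) + 1 = real m + 1 + 1"
    by simp
  ultimately show ?case
    using step.IH unfolding H_Suc Suc_eq by linarith
qed simp

lemma H_minus_ln_half_antimono:
  assumes "k \<le> n"
  shows "H n - ln (real n + 1/2) \<le> H k - ln (real k + 1/2)"
  using assms
proof (induction n rule: dec_induct)
  case (step m)
  have "2 * ((real m + 3/2) - (real m + 1/2)) / ((real m + 1/2) + (real m + 3/2))
      \<le> ln (real m + 3/2) - ln (real m + 1/2)"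
    by (rule ln_inverse_approx_ge) auto
  moreover have "2 * ((real m + 3/2) - (real m + 1/2)) / ((real m + 1/2) + (real m + 3/2))
      = 1 / (real m + 1)"
    by (simp add: field_simps)
  moreover have Suc_eq: "real (Suc m) + 1/2 = real m + 3/2"
    by simp
  ultimately show ?case
    using step.IH unfolding H_Suc Suc_eq by linarith
qed simp

definition H_gap :: "nat \<Rightarrow> real \<Rightarrow> real" where
  "H_gap k y = (real k + 1) * H k - y * ln y"

lemma scaled_Cn_minus_Cfun_eq:
  assumes "1 \<le> i" "i \<le> n" "0 < u" "u < 1"
  shows "real n * (Cn n i - Cfun u) =
    3 + 2 * H_gap (i - 1) (real n * u) + 2 * H_gap (n - i) (real n * (1 - u)) - 2 * H_gap n (real n)"
proof -
  have n: "real n > 0"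
    using assms by simp
  have "real n * Cn n i = real n - 1 + mu (i - 1) + mu (n - i) - mu n"
    using n by (simp add: Cn_def field_simps)
  also have "\<dots> = real n + 3 + 2 * ((real (i - 1) + 1) * H (i - 1))
      + 2 * ((real (n - i) + 1) * H (n - i)) - 2 * ((real n + 1) * H n)"
    using assms by (simp add: mu_def algebra_simps)
  finally have Cn_eq: "real n * Cn n i = \<dots>" .
  have "real n * Cfun u = real n + 2 * (real n * u) * ln u + 2 * (real n * (1 - u)) * ln (1 - u)"
    using assms by (simp add: Cfun_def algebra_simps)
  also have "\<dots> = real n + 2 * ((real n * u) * ln (real n * u))
      + 2 * ((real n * (1 - u)) * ln (real n * (1 - u))) - 2 * (real n * ln (real n))"
  proof -
    have "ln (real n * u) = ln (real n) + ln u" "ln (real n * (1 - u)) = ln (real n) + ln (1 - u)"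
      using assms n by (simp_all add: ln_mult)
    then show ?thesis by (simp add: algebra_simps)
  qed
  finally have Cfun_eq: "real n * Cfun u = \<dots>" .
  show ?thesis
    unfolding right_diff_distrib Cn_eq Cfun_eq H_gap_def by (simp add: algebra_simps)
qed

lemma H_gap_le:
  assumes "k \<le> n" "0 < y"
  shows "H_gap k y \<le> (real k + 1) * (H n - ln (real n + 1)) + (real k + 1 - y) * (1 + ln (real k + 1))"
proof -
  have "(real k + 1) * H k \<le> (real k + 1) * (H n - ln (real n + 1) + ln (real k + 1))"
    using H_minus_ln_Suc_mono[OF assms(1)] by (intro mult_left_mono) auto
  moreover have "(y - (real k + 1)) * (1 + ln (real k + 1)) \<le> y * ln y - (real k + 1) * ln (real k + 1)"
    using assms by (intro mult_ln_ge_tangent) auto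
  ultimately show ?thesis
    unfolding H_gap_def by (simp add: algebra_simps)
qed

lemma H_gap_ge:
  assumes "k \<le> n" "0 < y" "y / 2 \<le> real k + 1/2"
  shows "(real k + 1) * (H n - ln (real n + 1/2)) + (real k + 1 - y) * ln y + real k - y \<le> H_gap k y"
proof -
  have "(real k + 1) * (H n - ln (real n + 1/2) + ln (real k + 1/2)) \<le> (real k + 1) * H k"
    using H_minus_ln_half_antimono[OF assms(1)] by (intro mult_left_mono) auto
  moreover have "(real k + 1/2 - y) * (1 + ln y) \<le> (real k + 1/2) * ln (real k + 1/2) - y * ln y"
    using assms by (intro mult_ln_ge_tangent) auto
  moreover have "ln (y / 2) \<le> ln (real k + 1/2)"
    using assms by (intro ln_mono) auto
  then have "ln y - 1 \<le> ln (real k + 1/2)"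
    using assms(2) ln_2_less_1 by (simp add: ln_div)
  ultimately show ?thesis
    unfolding H_gap_def by (simp add: algebra_simps) argo
qed

lemma H_gap_self_ge:
  assumes "1 \<le> n"
  shows "(real n + 1) * (H n - ln (real n + 1)) + 1 + ln (real n) \<le> H_gap n (real n)"
proof -
  have "((real n + 1) - real n) * (1 + ln (real n)) \<le> (real n + 1) * ln (real n + 1) - real n * ln (real n)"
    using assms by (intro mult_ln_ge_tangent) auto
  then show ?thesis
    unfolding H_gap_def by (simp add: algebra_simps)
qed

lemma H_gap_self_le:
  assumes "1 \<le> n"
  shows "H_gap n (real n) \<le> (real n + 1) * (H n - ln (real n + 1/2)) + 1 + ln (real n)"
proof -
  have "(real n - (real n + 1/2)) * (1 + ln (real n + 1/2))
      \<le> real n * ln (real n) - (real n + 1/2) * ln (real n + 1/2)"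
    using assms by (intro mult_ln_ge_tangent) auto
  moreover have "ln (real n + 1/2) \<le> ln (real n) + 1/2"
  proof -
    have "ln ((real n + 1/2) / real n) \<le> (real n + 1/2) / real n - 1"
      using assms by (intro ln_le_minus_one) auto
    also have "\<dots> \<le> 1/2"
      using assms by (simp add: field_simps)
    finally show ?thesis
      using assms by (simp add: ln_div)
  qed
  ultimately show ?thesis
    unfolding H_gap_def by (simp add: algebra_simps)
qed

lemma nat_ceiling_mult_bounds:
  assumes "1 \<le> n" "0 < u" "u < 1"
  defines "i \<equiv> nat \<lceil>real n * u\<rceil>"
  shows "1 \<le> i" "i \<le> n" "real i - 1 < real n * u" "real n * u \<le> real i"
proof -
  have "0 < real n * u" "real n * u < real n"
    using assms by auto
  then have c1: "1 \<le> \<lceil>real n * u\<rceil>" and c2: "\<lceil>real n * u\<rceil> \<le> int n"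
    by (simp_all add: one_le_ceiling ceiling_le_iff less_imp_le)
  then show "1 \<le> i" "i \<le> n"
    unfolding i_def by linarith+
  have "real i = of_int \<lceil>real n * u\<rceil>"
    using c1 by (simp add: i_def)
  then show "real i - 1 < real n * u" "real n * u \<le> real i"
    by linarith+
qed

lemma scaled_Cn_minus_Cfun_le:
  assumes "1 \<le> n" "0 < u" "u < 1"
  shows "real n * (Cn n (nat \<lceil>real n * u\<rceil>) - Cfun u) \<le> 3"
proof -
  define x where "x = real n * u"
  define i where "i = nat \<lceil>x\<rceil>"
  define c where "c = H n - ln (real n + 1)"
  note i = nat_ceiling_mult_bounds[OF assms, folded x_def, folded i_def]
  have x: "0 < x" "x < real n"
    using assms by (auto simp: x_def)
  have nx: "real n * (1 - u) = real n - x"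
    by (simp add: x_def algebra_simps)
  have "H_gap (i - 1) x \<le> real i * c + (real i - x) * (1 + ln (real i))"
    using H_gap_le[of "i - 1" n x] i x by (simp add: c_def)
  moreover have "H_gap (n - i) (real n - x)
      \<le> (real n - real i + 1) * c + (1 + x - real i) * (1 + ln (real n - real i + 1))"
    using H_gap_le[of "n - i" n "real n - x"] i x by (simp add: c_def)
  moreover have "(real n + 1) * c + 1 + ln (real n) \<le> H_gap n (real n)"
    using H_gap_self_ge[OF assms(1)] by (simp add: c_def)
  moreover have "(real i - x) * ln (real i) \<le> (real i - x) * ln (real n)"
    using i by (intro mult_left_mono) auto
  moreover have "(1 + x - real i) * ln (real n - real i + 1) \<le> (1 + x - real i) * ln (real n)"
    using i by (intro mult_left_mono) auto
  moreover have "real n * (Cn n i - Cfun u) =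
      3 + 2 * H_gap (i - 1) x + 2 * H_gap (n - i) (real n - x) - 2 * H_gap n (real n)"
    using scaled_Cn_minus_Cfun_eq[of i n u, folded x_def, unfolded nx] i assms by simp
  ultimately show ?thesis
    unfolding x_def[symmetric] i_def[symmetric] by (simp add: algebra_simps)
qed

lemma scaled_Cn_minus_Cfun_ge:
  assumes "1 \<le> n" "0 < u" "u < 1"
  shows "2 * min (ln u) (ln (1 - u)) - 1 \<le> real n * (Cn n (nat \<lceil>real n * u\<rceil>) - Cfun u)"
proof -
  define x where "x = real n * u"
  define i where "i = nat \<lceil>x\<rceil>"
  define c where "c = H n - ln (real n + 1/2)"
  define m where "m = min (ln u) (ln (1 - u))"
  note i = nat_ceiling_mult_bounds[OF assms, folded x_def, folded i_def]
  have x: "0 < x" "x < real n"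
    using assms by (auto simp: x_def)
  have nx: "real n * (1 - u) = real n - x"
    by (simp add: x_def algebra_simps)
  have ln_x: "ln x = ln (real n) + ln u"
    using assms by (simp add: x_def ln_mult)
  have ln_nx: "ln (real n - x) = ln (real n) + ln (1 - u)"
    using assms by (simp add: ln_mult flip: nx)
  have i_real: "1 \<le> real i" "real i \<le> real n"
    using i by simp_all
  have i_minus_1: "real (i - 1) = real i - 1" and n_minus_i: "real (n - i) = real n - real i"
    using i by simp_all
  have "x / 2 \<le> real (i - 1) + 1/2"
    unfolding i_minus_1 using i(4) i_real by argo
  then have "real i * c + (real i - x) * ln x + real i - 1 - x \<le> H_gap (i - 1) x"
    using H_gap_ge[of "i - 1" n x] i x by (simp add: c_def i_minus_1 algebra_simps)
  moreover have "(real n - x) / 2 \<le> real (n - i) + 1/2"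
    unfolding n_minus_i using i(3) i_real by argo
  then have "(real n - real i + 1) * c + (1 + x - real i) * ln (real n - x) + x - real i
      \<le> H_gap (n - i) (real n - x)"
    using H_gap_ge[of "n - i" n "real n - x"] i x by (simp add: c_def n_minus_i algebra_simps)
  moreover have "H_gap n (real n) \<le> (real n + 1) * c + 1 + ln (real n)"
    using H_gap_self_le[OF assms(1)] by (simp add: c_def)
  moreover have "(real i - x) * m \<le> (real i - x) * ln u"
    using i by (intro mult_left_mono) (auto simp: m_def)
  moreover have "(1 + x - real i) * m \<le> (1 + x - real i) * ln (1 - u)"
    using i by (intro mult_left_mono) (auto simp: m_def)
  moreover have "real n * (Cn n i - Cfun u) =
      3 + 2 * H_gap (i - 1) x + 2 * H_gap (n - i) (real n - x) - 2 * H_gap n (real n)"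
    using scaled_Cn_minus_Cfun_eq[of i n u, folded x_def, unfolded nx] i assms by simp
  ultimately show ?thesis
    unfolding x_def[symmetric] i_def[symmetric] m_def[symmetric]
    by (simp add: ln_x ln_nx algebra_simps)
qed

definition sq_error_majorant :: "real \<Rightarrow> real" where
  "sq_error_majorant u = 10 - 4 * ln u - 4 * ln (1 - u) + 4 * (ln u)\<^sup>2 + 4 * (ln (1 - u))\<^sup>2"

lemma sq_error_majorant_has_integral: "(sq_error_majorant has_integral 34) {0..1}"
proof -
  have "((\<lambda>u. ln (1 - u)) has_integral -1) {0..1::real}"
    by (rule has_integral_reflect_01[OF ln_has_integral])
  moreover have "((\<lambda>u. (ln (1 - u))\<^sup>2) has_integral 2) {0..1::real}"
    by (rule has_integral_reflect_01[OF ln_squared_has_integral])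
  ultimately have "((\<lambda>u::real. 10 - 4 * ln u - 4 * ln (1 - u) + 4 * (ln u)\<^sup>2 + 4 * (ln (1 - u))\<^sup>2)
          has_integral 10 - 4 * (-1) - 4 * (-1) + 4 * 2 + 4 * 2) {0..1}"
    by (intro has_integral_add has_integral_diff has_integral_mult_right
        ln_has_integral ln_squared_has_integral) (use has_integral_const_real[of "10::real" 0 1] in auto)
  then show ?thesis by (simp add: sq_error_majorant_def[abs_def])
qed

lemma sq_error_majorant_nonneg: "0 \<le> sq_error_majorant u"
proof -
  have "0 \<le> (ln u - 1/2)\<^sup>2 + (ln (1 - u) - 1/2)\<^sup>2" by simp
  then show ?thesis by (simp add: sq_error_majorant_def power2_eq_square algebra_simps)
qed

lemma sq_le_sq_error_majorant:
  assumes "0 < u" "u < 1" "2 * min (ln u) (ln (1 - u)) - 1 \<le> d" "d \<le> 3"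
  shows "d\<^sup>2 \<le> sq_error_majorant u"
proof -
  have ln_nonpos: "ln u \<le> 0" "ln (1 - u) \<le> 0"
    using assms(1,2) by auto
  have "\<bar>d\<bar> \<le> max 3 (1 - 2 * min (ln u) (ln (1 - u)))"
    using assms(3,4) by linarith
  then have "d\<^sup>2 \<le> (max 3 (1 - 2 * min (ln u) (ln (1 - u))))\<^sup>2"
    by (metis abs_ge_zero power2_abs power_mono)
  also have "\<dots> \<le> sq_error_majorant u"
  proof -
    have sq_expand: "(1 - 2 * l)\<^sup>2 = 1 - 4 * l + 4 * l\<^sup>2" for l :: real
      by (simp add: power2_eq_square algebra_simps)
    have "9 \<le> sq_error_majorant u"
      unfolding sq_error_majorant_def
      using ln_nonpos zero_le_power2[of "ln u"] zero_le_power2[of "ln (1 - u)"] by linarith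
    moreover have "(1 - 2 * ln u)\<^sup>2 \<le> sq_error_majorant u" "(1 - 2 * ln (1 - u))\<^sup>2 \<le> sq_error_majorant u"
      unfolding sq_expand sq_error_majorant_def
      using ln_nonpos zero_le_power2[of "ln u"] zero_le_power2[of "ln (1 - u)"] by linarith+
    ultimately show ?thesis
      by (auto simp: max_def min_def)
  qed
  finally show ?thesis .
qed

lemma Cn_ceiling_minus_Cfun_sq_le:
  assumes "1 \<le> n" "0 < u" "u < 1"
  shows "(Cn n (nat \<lceil>real n * u\<rceil>) - Cfun u)\<^sup>2 \<le> sq_error_majorant u / (real n)\<^sup>2"
proof -
  have "(real n * (Cn n (nat \<lceil>real n * u\<rceil>) - Cfun u))\<^sup>2 \<le> sq_error_majorant u"
    using assms by (intro sq_le_sq_error_majorant scaled_Cn_minus_Cfun_le scaled_Cn_minus_Cfun_ge)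
  then have "(real n)\<^sup>2 * (Cn n (nat \<lceil>real n * u\<rceil>) - Cfun u)\<^sup>2 \<le> sq_error_majorant u"
    by (simp add: power_mult_distrib)
  then show ?thesis
    using assms(1) by (simp add: pos_le_divide_eq mult.commute)
qed

lemma integral_Cn_ceiling_minus_Cfun_sq_le:
  assumes "1 \<le> n"
  shows "(\<integral>u. (Cn n (nat \<lceil>real n * u\<rceil>) - Cfun u)\<^sup>2 \<partial>uniform_measure lborel {0..1})
    \<le> 34 / (real n)\<^sup>2"
proof -
  let ?M = "uniform_measure lborel {0..1::real}"
  have "sq_error_majorant \<in> borel_measurable borel"
    unfolding sq_error_majorant_def[abs_def] by measurable
  note majorant = uniform_measure_01_has_integral[OF sq_error_majorant_has_integral
      sq_error_majorant_nonneg this]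
  have "(\<integral>u. (Cn n (nat \<lceil>real n * u\<rceil>) - Cfun u)\<^sup>2 \<partial>?M) \<le> (\<integral>u. sq_error_majorant u / (real n)\<^sup>2 \<partial>?M)"
  proof (rule integral_mono_AE')
    show "integrable ?M (\<lambda>u. sq_error_majorant u / (real n)\<^sup>2)"
      using majorant(1) by simp
    show "AE u in ?M. 0 \<le> sq_error_majorant u / (real n)\<^sup>2"
      using sq_error_majorant_nonneg by simp
    show "AE u in ?M. (Cn n (nat \<lceil>real n * u\<rceil>) - Cfun u)\<^sup>2 \<le> sq_error_majorant u / (real n)\<^sup>2"
    proof (rule AE_uniform_measureI)
      show "AE u in lborel. u \<in> {0..1} \<longrightarrow>
          (Cn n (nat \<lceil>real n * u\<rceil>) - Cfun u)\<^sup>2 \<le> sq_error_majorant u / (real n)\<^sup>2"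
        using AE_lborel_singleton[of 0] AE_lborel_singleton[of 1]
        by eventually_elim (use Cn_ceiling_minus_Cfun_sq_le[OF assms] in auto)
    qed simp
  qed
  also have "\<dots> = 34 / (real n)\<^sup>2"
    using majorant(2) by simp
  finally show ?thesis .
qed

lemma three_plus_two_pi_div_sqrt3_bounds:
  "6 \<le> 3 + 2 * pi / sqrt 3" "3 + 2 * pi / sqrt 3 < 6.63"
proof -
  have "sqrt 3 \<le> (2::real)"
    by (simp add: real_sqrt_le_iff')
  then show "6 \<le> 3 + 2 * pi / sqrt 3"
    using pi_gt3 by (simp add: field_simps)
  have "2 * pi < 3.63 * 1.732"
    using pi_approx(2) by simp
  also have "1.732 < sqrt (3::real)"
    by (rule real_less_rsqrt) (simp add: power2_eq_square)
  finally have "2 * pi < 3.63 * sqrt 3"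
    by simp
  then show "3 + 2 * pi / sqrt 3 < 6.63"
    by (simp add: field_simps)
qed

theorem lemma2p2:
  fixes n :: nat
  assumes "n \<ge> 1"
  shows "b n \<le> (3 + 2 * pi / sqrt 3) / real n \<and> (3 + 2 * pi / sqrt 3) / real n < 6.63 / real n"
proof
  have n: "0 < real n"
    using assms by simp
  have "b n \<le> sqrt (34 / (real n)\<^sup>2)"
    unfolding b_def using integral_Cn_ceiling_minus_Cfun_sq_le[OF assms] by simp
  also have "\<dots> = sqrt 34 / real n"
    using n by (simp add: real_sqrt_divide)
  also have "\<dots> \<le> 6 / real n"
    using n by (simp add: divide_right_mono real_sqrt_le_iff')
  also have "\<dots> \<le> (3 + 2 * pi / sqrt 3) / real n"
    using n three_plus_two_pi_div_sqrt3_bounds(1) by (simp add: divide_right_mono)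
  finally show "b n \<le> (3 + 2 * pi / sqrt 3) / real n" .
  show "(3 + 2 * pi / sqrt 3) / real n < 6.63 / real n"
    using three_plus_two_pi_div_sqrt3_bounds(2) n by (rule divide_strict_right_mono)
qed

end
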